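(* Let $\omega\in\mathbb C$ with $|\omega|=1$ and let $m\ge1$ be an integer. Then $L_{m,\omega}=\frac im\big(\mathrm{Log}(\omega\mathbf1-L^m)-\mathrm{Log}(\bar\omega\mathbf1-L^{*m})\big)$ is a time operator of $N$ with dense CCR-domain $\mathrm D(NL_{m,\omega})\cap\mathrm D(L_{m,\omega}N)$, i.e. $[N,L_{m,\omega}]=-i\mathbf1$ on this domain.
   Context: $\ell^2=\ell^2(\mathbb N)$, $\mathbb N=\{0,1,\dots\}$, basis $(\xi_n)$; $N\xi_n=n\xi_n$ (self-adjoint, maximal domain); $L$ left shift ($L\xi_n=\xi_{n-1}$, $L\xi_0=0$), $L^*$ right shift. For a linear operator $A$ and $\omega\ne0$: $\mathrm D(\mathrm{Log}(\omega\mathbf1-A))=\{\varphi\in\bigcap_{k\ge0}\mathrm D(A^k):\lim_K\sum_{k=1}^K\frac1k(\omega^{-1}A)^k\varphi\text{ exists}\}$ and $\mathrm{Log}(\omega\mathbf1-A)\varphi=\log(\omega)\varphi-\sum_{k\ge1}\frac1k(\omega^{-1}A)^k\varphi$, with $\log\omega$ a fixed (e.g. principal) logarithm. $L_{m,\omega}$ is defined on the intersection of the two domains. A time operator of a self-adjoint $H$ is a symmetric operator $T$ with $[H,T]=-i\mathbf1$ on some nonzero subspace (CCR-domain) of $\mathrm D(HT)\cap\mathrm D(TH)$. *)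

theory Defs
  imports "HOL-Analysis.Analysis"
begin

text \<open>The Hilbert space l2(N) is modelled as the set of square-summable
  sequences nat => complex; operators are (partial) maps on sequences together
  with an explicit domain set.\<close>

definition l2 :: "(nat \<Rightarrow> complex) set" where
  "l2 = {f. summable (\<lambda>n. (cmod (f n))^2)}"

definition l2norm :: "(nat \<Rightarrow> complex) \<Rightarrow> real" where
  "l2norm f = sqrt (\<Sum>n. (cmod (f n))^2)"

definition l2inner :: "(nat \<Rightarrow> complex) \<Rightarrow> (nat \<Rightarrow> complex) \<Rightarrow> complex" where
  "l2inner f g = (\<Sum>n. cnj (f n) * g n)"

definition l2_dense :: "(nat \<Rightarrow> complex) set \<Rightarrow> bool" where
  "l2_dense D \<longleftrightarrow> D \<subseteq> l2 \<and>
     (\<forall>f\<in>l2. \<forall>e>0. \<exists>g\<in>D. l2norm (\<lambda>n. f n - g n) < e)"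

definition numop :: "(nat \<Rightarrow> complex) \<Rightarrow> (nat \<Rightarrow> complex)" where
  "numop \<phi> = (\<lambda>n. of_nat n * \<phi> n)"

definition numop_dom :: "(nat \<Rightarrow> complex) set" where
  "numop_dom = {\<phi>\<in>l2. numop \<phi> \<in> l2}"

text \<open>Left shift L (L xi_n = xi_(n-1), L xi_0 = 0) and right shift L*.\<close>
definition lshift :: "(nat \<Rightarrow> complex) \<Rightarrow> (nat \<Rightarrow> complex)" where
  "lshift \<phi> = (\<lambda>n. \<phi> (Suc n))"

definition rshift :: "(nat \<Rightarrow> complex) \<Rightarrow> (nat \<Rightarrow> complex)" where
  "rshift \<phi> = (\<lambda>n. if n = 0 then 0 else \<phi> (n - 1))"

text \<open>Log(omega 1 - A) for an operator A with domain D.\<close>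
definition log_series_conv ::
  "complex \<Rightarrow> ((nat \<Rightarrow> complex) \<Rightarrow> (nat \<Rightarrow> complex)) \<Rightarrow> (nat \<Rightarrow> complex) \<Rightarrow> (nat \<Rightarrow> complex) \<Rightarrow> bool" where
  "log_series_conv \<omega> A \<phi> \<psi> \<longleftrightarrow> \<psi> \<in> l2 \<and>
     (\<lambda>K. l2norm (\<lambda>n. (\<Sum>k=1..K. (1 / of_nat k) * (inverse \<omega>)^k * (A ^^ k) \<phi> n) - \<psi> n))
       \<longlonglongrightarrow> 0"

definition Log_dom ::
  "complex \<Rightarrow> (nat \<Rightarrow> complex) set \<Rightarrow> ((nat \<Rightarrow> complex) \<Rightarrow> (nat \<Rightarrow> complex)) \<Rightarrow> (nat \<Rightarrow> complex) set" where
  "Log_dom \<omega> D A = {\<phi>. (\<forall>k. (A ^^ k) \<phi> \<in> D) \<and> (\<exists>\<psi>. log_series_conv \<omega> A \<phi> \<psi>)}"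

definition Log_op ::
  "complex \<Rightarrow> ((nat \<Rightarrow> complex) \<Rightarrow> (nat \<Rightarrow> complex)) \<Rightarrow> (nat \<Rightarrow> complex) \<Rightarrow> (nat \<Rightarrow> complex)" where
  "Log_op \<omega> A \<phi> = (\<lambda>n. Ln \<omega> * \<phi> n - (THE \<psi>. log_series_conv \<omega> A \<phi> \<psi>) n)"

text \<open>L_{m,omega} = (i/m)(Log(omega 1 - L^m) - Log(cnj omega 1 - L*^m)),
  on the intersection of the two domains (L, L* are bounded, domain l2).\<close>
definition Lmw_dom :: "nat \<Rightarrow> complex \<Rightarrow> (nat \<Rightarrow> complex) set" where
  "Lmw_dom m \<omega> = Log_dom \<omega> l2 (lshift ^^ m) \<inter> Log_dom (cnj \<omega>) l2 (rshift ^^ m)"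

definition Lmw :: "nat \<Rightarrow> complex \<Rightarrow> (nat \<Rightarrow> complex) \<Rightarrow> (nat \<Rightarrow> complex)" where
  "Lmw m \<omega> \<phi> = (\<lambda>n. (\<i> / of_nat m) *
      (Log_op \<omega> (lshift ^^ m) \<phi> n - Log_op (cnj \<omega>) (rshift ^^ m) \<phi> n))"

definition symmetric_op ::
  "(nat \<Rightarrow> complex) set \<Rightarrow> ((nat \<Rightarrow> complex) \<Rightarrow> (nat \<Rightarrow> complex)) \<Rightarrow> bool" where
  "symmetric_op D T \<longleftrightarrow> l2_dense D \<and> (\<forall>\<phi>\<in>D. T \<phi> \<in> l2) \<and>
     (\<forall>\<phi>\<in>D. \<forall>\<psi>\<in>D. l2inner (T \<phi>) \<psi> = l2inner \<phi> (T \<psi>))"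

definition prod_dom ::
  "(nat \<Rightarrow> complex) set \<Rightarrow> (nat \<Rightarrow> complex) set \<Rightarrow> ((nat \<Rightarrow> complex) \<Rightarrow> (nat \<Rightarrow> complex)) \<Rightarrow> (nat \<Rightarrow> complex) set" where
  "prod_dom DA DB B = {\<phi>\<in>DB. B \<phi> \<in> DA}"

definition is_subspace :: "(nat \<Rightarrow> complex) set \<Rightarrow> bool" where
  "is_subspace S \<longleftrightarrow> (\<lambda>n. 0) \<in> S \<and> (\<forall>f\<in>S. \<forall>g\<in>S. (\<lambda>n. f n + g n) \<in> S) \<and>
     (\<forall>c. \<forall>f\<in>S. (\<lambda>n. c * f n) \<in> S)"

definition time_operator_with ::
  "(nat \<Rightarrow> complex) set \<Rightarrow> ((nat \<Rightarrow> complex) \<Rightarrow> (nat \<Rightarrow> complex)) \<Rightarrow>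
   (nat \<Rightarrow> complex) set \<Rightarrow> ((nat \<Rightarrow> complex) \<Rightarrow> (nat \<Rightarrow> complex)) \<Rightarrow>
   (nat \<Rightarrow> complex) set \<Rightarrow> bool" where
  "time_operator_with DH H DT T C \<longleftrightarrow> symmetric_op DT T \<and>
     is_subspace C \<and> (\<exists>\<phi>\<in>C. \<phi> \<noteq> (\<lambda>n. 0)) \<and>
     C \<subseteq> prod_dom DH DT T \<inter> prod_dom DT DH H \<and>
     (\<forall>\<phi>\<in>C. (\<lambda>n. H (T \<phi>) n - T (H \<phi>) n) = (\<lambda>n. - \<i> * \<phi> n))"

end

theory Submission
  imports Defs
begin

text \<open>
  On the CCR domain the factor \<open>1/k\<close> of the two logarithm series is cancelled by the
  commutators \<open>[N, L^(mk)] = -mk L^(mk)\<close> and \<open>[N, L*^(mk)] = mk L*^(mk)\<close>. Hence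
  \<open>[N, L_(m,\<omega>)] \<phi> = i (u + v)\<close>, where \<open>u\<close> and \<open>v\<close> are the coordinatewise sums of the geometric
  series \<open>\<Sum>_k \<omega>^(-k) L^(mk) \<phi>\<close> and \<open>\<Sum>_k \<omega>^k L*^(mk) \<phi>\<close>. Shifting by \<open>m\<close> shows that
  \<open>g = u + v + \<phi>\<close> satisfies \<open>g(p + m) = \<omega> g(p)\<close>; since \<open>|\<omega>| = 1\<close> and \<open>g\<close> is square summable,
  \<open>g = 0\<close>, which is the commutation relation. Symmetry holds because \<open>L^(mk)\<close> and \<open>L*^(mk)\<close>
  are adjoint and both series converge in norm.

  For density: the vector \<open>\<delta>_j - \<omega> \<delta>_(j+m)\<close> lies in the CCR domain, because its \<open>L^m\<close>-series is
  a finite sum and its \<open>L*^m\<close>-series has coefficients \<open>\<omega>^k/k - \<omega>^k/(k-1) = O(k^-2)\<close>, which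
  \<open>N\<close> only multiplies by \<open>O(k)\<close>. Telescoping gives \<open>\<delta>_j - \<omega>^t \<delta>_(j+mt)\<close> in the CCR domain, and
  the average over \<open>t = 1..K\<close> differs from \<open>\<delta>_j\<close> by a vector of norm \<open>K^(-1/2)\<close>.
\<close>

section \<open>Square-summable sequences\<close>

lemma l2_add:
  assumes "f \<in> l2" "g \<in> l2"
  shows "(\<lambda>n. f n + g n) \<in> l2"
proof -
  have "(cmod (f n + g n))^2 \<le> 2 * (cmod (f n))^2 + 2 * (cmod (g n))^2" for n
  proof -
    have "(cmod (f n + g n))^2 \<le> (cmod (f n) + cmod (g n))^2"
      by (simp add: norm_triangle_ineq power_mono)
    also have "\<dots> \<le> 2 * (cmod (f n))^2 + 2 * (cmod (g n))^2"
      using zero_le_power2[of "cmod (f n) - cmod (g n)"] by (simp add: power2_eq_square algebra_simps)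
    finally show ?thesis .
  qed
  moreover have "summable (\<lambda>n. 2 * (cmod (f n))^2 + 2 * (cmod (g n))^2)"
    using assms by (intro summable_add summable_mult) (auto simp: l2_def)
  ultimately show ?thesis
    unfolding l2_def by (auto intro: summable_comparison_test[OF _ \<open>summable _\<close>])
qed

lemma l2_scale: "f \<in> l2 \<Longrightarrow> (\<lambda>n. c * f n) \<in> l2"
  by (simp add: l2_def norm_mult power_mult_distrib summable_mult)

lemma l2_zero: "(\<lambda>n. 0) \<in> l2"
  by (simp add: l2_def)

lemma l2_diff: "f \<in> l2 \<Longrightarrow> g \<in> l2 \<Longrightarrow> (\<lambda>n. f n - g n) \<in> l2"
  using l2_add[of f "\<lambda>n. - 1 * g n"] l2_scale[of g "- 1"] by simp

lemma l2_sum: "(\<And>k. k \<in> S \<Longrightarrow> F k \<in> l2) \<Longrightarrow> (\<lambda>n. \<Sum>k\<in>S. F k n) \<in> l2"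
  by (induction S rule: infinite_finite_induct) (simp_all add: l2_zero l2_add)

lemma l2_finite_support: "finite S \<Longrightarrow> (\<And>n. n \<notin> S \<Longrightarrow> f n = 0) \<Longrightarrow> f \<in> l2"
  unfolding l2_def mem_Collect_eq by (rule summable_finite) auto

lemma l2_dense_subset: "l2_dense A \<Longrightarrow> A \<subseteq> B \<Longrightarrow> B \<subseteq> l2 \<Longrightarrow> l2_dense B"
  unfolding l2_dense_def by blast

lemma l2norm_nonneg: "f \<in> l2 \<Longrightarrow> 0 \<le> l2norm f"
  unfolding l2norm_def l2_def by (simp add: suminf_nonneg)

lemma l2norm_zero: "l2norm (\<lambda>n. 0) = 0"
  by (simp add: l2norm_def)

lemma L2_set_le_l2norm:
  assumes "f \<in> l2" "finite A"
  shows "L2_set (\<lambda>i. cmod (f i)) A \<le> l2norm f"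
proof -
  have "(\<Sum>i\<in>A. (cmod (f i))^2) \<le> (\<Sum>n. (cmod (f n))^2)"
    using assms by (intro sum_le_suminf) (auto simp: l2_def)
  then show ?thesis unfolding L2_set_def l2norm_def by simp
qed

lemma norm_le_l2norm: "f \<in> l2 \<Longrightarrow> cmod (f p) \<le> l2norm f"
  using L2_set_le_l2norm[of f "{p}"] by (simp add: L2_set_def)

lemma l2norm_le:
  assumes "f \<in> l2" "\<And>N. L2_set (\<lambda>i. cmod (f i)) {..<N} \<le> B"
  shows "l2norm f \<le> B"
proof -
  have B: "0 \<le> B" using assms(2)[of 0] by simp
  have "(\<Sum>n. (cmod (f n))^2) \<le> B^2"
  proof (rule suminf_le_const)
    show "summable (\<lambda>n. (cmod (f n))^2)" using assms by (simp add: l2_def)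
    fix N
    have s: "0 \<le> (\<Sum>i<N. (cmod (f i))^2)" by (simp add: sum_nonneg)
    have "sqrt (\<Sum>i<N. (cmod (f i))^2) \<le> B" using assms(2)[of N] by (simp add: L2_set_def)
    then have "(sqrt (\<Sum>i<N. (cmod (f i))^2))^2 \<le> B^2" using s by (intro power_mono) auto
    then show "(\<Sum>i<N. (cmod (f i))^2) \<le> B^2" using s by simp
  qed
  then have "sqrt (\<Sum>n. (cmod (f n))^2) \<le> sqrt (B^2)" by (rule real_sqrt_le_mono)
  then show ?thesis unfolding l2norm_def using B by simp
qed

lemma l2norm_triangle:
  assumes "f \<in> l2" "g \<in> l2"
  shows "l2norm (\<lambda>n. f n + g n) \<le> l2norm f + l2norm g"
proof (rule l2norm_le[OF l2_add[OF assms]])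
  fix N
  have "L2_set (\<lambda>i. cmod (f i + g i)) {..<N} \<le> L2_set (\<lambda>i. cmod (f i) + cmod (g i)) {..<N}"
    by (rule L2_set_mono) (auto intro: norm_triangle_ineq)
  also have "\<dots> \<le> L2_set (\<lambda>i. cmod (f i)) {..<N} + L2_set (\<lambda>i. cmod (g i)) {..<N}"
    by (rule L2_set_triangle_ineq)
  also have "\<dots> \<le> l2norm f + l2norm g"
    using assms by (intro add_mono L2_set_le_l2norm) auto
  finally show "L2_set (\<lambda>i. cmod (f i + g i)) {..<N} \<le> l2norm f + l2norm g" .
qed

lemma l2norm_sum_le:
  "(\<And>i. i \<in> S \<Longrightarrow> F i \<in> l2) \<Longrightarrow> l2norm (\<lambda>p. \<Sum>i\<in>S. F i p) \<le> (\<Sum>i\<in>S. l2norm (F i))"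
proof (induction S rule: infinite_finite_induct)
  case (insert x S)
  have "l2norm (\<lambda>p. \<Sum>i\<in>insert x S. F i p) \<le> l2norm (F x) + l2norm (\<lambda>p. \<Sum>i\<in>S. F i p)"
    using l2norm_triangle[of "F x" "\<lambda>p. \<Sum>i\<in>S. F i p"] insert by (simp add: l2_sum)
  also have "\<dots> \<le> (\<Sum>i\<in>insert x S. l2norm (F i))" using insert by simp
  finally show ?case .
qed (simp_all add: l2norm_zero)

lemma l2norm_scale: "f \<in> l2 \<Longrightarrow> l2norm (\<lambda>n. c * f n) = cmod c * l2norm f"
  by (simp add: l2norm_def l2_def norm_mult power_mult_distrib suminf_mult real_sqrt_mult)

lemma l2norm_finite_support_le:
  assumes "finite S" "\<And>n. n \<notin> S \<Longrightarrow> f n = 0" "\<And>n. cmod (f n) \<le> c"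
  shows "l2norm f \<le> sqrt (card S) * c"
proof -
  have c: "0 \<le> c" using assms(3)[of 0] norm_ge_zero order_trans by blast
  have "(\<Sum>n. (cmod (f n))^2) = (\<Sum>n\<in>S. (cmod (f n))^2)"
    using assms by (intro suminf_finite) auto
  also have "\<dots> \<le> card S * c^2"
    using sum_bounded_above[of S "\<lambda>n. (cmod (f n))^2" "c^2"] assms(3) c by (simp add: power_mono)
  finally have "sqrt (\<Sum>n. (cmod (f n))^2) \<le> sqrt (card S * c^2)" by (rule real_sqrt_le_mono)
  also have "\<dots> = sqrt (card S) * c" using c by (simp add: real_sqrt_mult)
  finally show ?thesis unfolding l2norm_def .
qed

lemma l2_tail:
  assumes "F \<in> l2"
  shows "(\<lambda>k. if K < k then F k else 0) \<in> l2"
  unfolding l2_def mem_Collect_eq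
proof (rule summable_comparison_test)
  show "summable (\<lambda>k. (cmod (F k))^2)" using assms by (simp add: l2_def)
  show "\<exists>N. \<forall>n\<ge>N. norm ((cmod (if K < n then F n else 0))^2) \<le> (cmod (F n))^2"
    by simp
qed

lemma l2norm_tail_tendsto_0:
  assumes "F \<in> l2"
  shows "(\<lambda>K. l2norm (\<lambda>k. if K < k then F k else 0)) \<longlonglongrightarrow> 0"
proof -
  have "l2norm (\<lambda>k. if K < k then F k else 0) = sqrt (\<Sum>i. (cmod (F (i + Suc K)))^2)" for K
  proof -
    let ?t = "\<lambda>k. (cmod (if K < k then F k else 0))^2"
    have "summable (\<lambda>i. ?t (i + Suc K))"
      using assms summable_iff_shift[of "\<lambda>n. (cmod (F n))^2" "Suc K"] by (simp add: l2_def)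
    then have "summable ?t"
      by (rule summable_iff_shift[THEN iffD1])
    then have "suminf ?t = (\<Sum>i. ?t (i + Suc K)) + (\<Sum>i<Suc K. ?t i)"
      by (rule suminf_split_initial_segment)
    moreover have "(\<Sum>i<Suc K. ?t i) = 0"
      by (intro sum.neutral) auto
    ultimately show ?thesis unfolding l2norm_def by simp
  qed
  moreover have "(\<lambda>K. \<Sum>i. (cmod (F (i + Suc K)))^2) \<longlonglongrightarrow> 0"
    using LIMSEQ_Suc[OF suminf_exist_split2[of "\<lambda>k. (cmod (F k))^2"]] assms by (simp add: l2_def)
  then have "(\<lambda>K. sqrt (\<Sum>i. (cmod (F (i + Suc K)))^2)) \<longlonglongrightarrow> sqrt 0"
    by (rule tendsto_real_sqrt)
  ultimately show ?thesis by simp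
qed

lemma summable_norm_l2inner:
  assumes "f \<in> l2" "g \<in> l2"
  shows "summable (\<lambda>n. cmod (cnj (f n) * g n))"
proof (rule summable_comparison_test)
  show "summable (\<lambda>n. (cmod (f n))^2 + (cmod (g n))^2)"
    using assms by (intro summable_add) (auto simp: l2_def)
  have "cmod (f n) * cmod (g n) \<le> (cmod (f n))^2 + (cmod (g n))^2" for n
  proof -
    have "2 * (cmod (f n) * cmod (g n)) \<le> (cmod (f n))^2 + (cmod (g n))^2"
      using zero_le_power2[of "cmod (f n) - cmod (g n)"] by (simp add: power2_eq_square algebra_simps)
    moreover have "0 \<le> cmod (f n) * cmod (g n)" by simp
    ultimately show ?thesis by linarith
  qed
  then show "\<exists>N. \<forall>n\<ge>N. norm (cmod (cnj (f n) * g n)) \<le> (cmod (f n))^2 + (cmod (g n))^2"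
    by (auto simp: norm_mult)
qed

lemma summable_l2inner: "f \<in> l2 \<Longrightarrow> g \<in> l2 \<Longrightarrow> summable (\<lambda>n. cnj (f n) * g n)"
  by (rule summable_norm_cancel[OF summable_norm_l2inner])

lemma norm_l2inner_le:
  assumes "f \<in> l2" "g \<in> l2"
  shows "cmod (l2inner f g) \<le> l2norm f * l2norm g"
proof -
  have "cmod (l2inner f g) \<le> (\<Sum>n. cmod (cnj (f n) * g n))"
    unfolding l2inner_def by (rule summable_norm[OF summable_norm_l2inner[OF assms]])
  also have "\<dots> \<le> l2norm f * l2norm g"
  proof (rule suminf_le_const[OF summable_norm_l2inner[OF assms]])
    fix N
    have "(\<Sum>i<N. cmod (cnj (f i) * g i)) = (\<Sum>i<N. \<bar>cmod (f i)\<bar> * \<bar>cmod (g i)\<bar>)"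
      by (simp add: norm_mult)
    also have "\<dots> \<le> L2_set (\<lambda>i. cmod (f i)) {..<N} * L2_set (\<lambda>i. cmod (g i)) {..<N}"
      by (rule L2_set_mult_ineq)
    also have "\<dots> \<le> l2norm f * l2norm g"
      using assms by (intro mult_mono L2_set_le_l2norm l2norm_nonneg L2_set_nonneg) auto
    finally show "(\<Sum>i<N. cmod (cnj (f i) * g i)) \<le> l2norm f * l2norm g" .
  qed
  finally show ?thesis .
qed

lemma l2inner_add_left:
  "f \<in> l2 \<Longrightarrow> g \<in> l2 \<Longrightarrow> h \<in> l2 \<Longrightarrow>
    l2inner (\<lambda>n. f n + g n) h = l2inner f h + l2inner g h"
  unfolding l2inner_def by (simp add: distrib_right suminf_add summable_l2inner)

lemma l2inner_add_right:
  "f \<in> l2 \<Longrightarrow> g \<in> l2 \<Longrightarrow> h \<in> l2 \<Longrightarrow>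
    l2inner h (\<lambda>n. f n + g n) = l2inner h f + l2inner h g"
  unfolding l2inner_def by (simp add: distrib_left suminf_add summable_l2inner)

lemma l2inner_diff_left:
  "f \<in> l2 \<Longrightarrow> g \<in> l2 \<Longrightarrow> h \<in> l2 \<Longrightarrow>
    l2inner (\<lambda>n. f n - g n) h = l2inner f h - l2inner g h"
  unfolding l2inner_def by (simp add: left_diff_distrib suminf_diff summable_l2inner)

lemma l2inner_scale_left:
  "f \<in> l2 \<Longrightarrow> h \<in> l2 \<Longrightarrow> l2inner (\<lambda>n. c * f n) h = cnj c * l2inner f h"
  unfolding l2inner_def by (simp add: mult.assoc suminf_mult summable_l2inner)

lemma l2inner_scale_right:
  "f \<in> l2 \<Longrightarrow> h \<in> l2 \<Longrightarrow> l2inner h (\<lambda>n. c * f n) = c * l2inner h f"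
  unfolding l2inner_def by (simp add: mult.left_commute suminf_mult summable_l2inner)

lemma l2inner_sum_left:
  "(\<And>k. k \<in> S \<Longrightarrow> G k \<in> l2) \<Longrightarrow> h \<in> l2 \<Longrightarrow>
    l2inner (\<lambda>n. \<Sum>k\<in>S. G k n) h = (\<Sum>k\<in>S. l2inner (G k) h)"
proof (induction S rule: infinite_finite_induct)
  case (insert x S)
  then have "l2inner (\<lambda>n. G x n + (\<Sum>k\<in>S. G k n)) h = l2inner (G x) h + (\<Sum>k\<in>S. l2inner (G k) h)"
    by (simp add: l2inner_add_left l2_sum)
  then show ?case using insert.hyps by simp
qed (simp_all add: l2inner_def)

lemma l2inner_sum_right:
  "(\<And>k. k \<in> S \<Longrightarrow> G k \<in> l2) \<Longrightarrow> h \<in> l2 \<Longrightarrow>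
    l2inner h (\<lambda>n. \<Sum>k\<in>S. G k n) = (\<Sum>k\<in>S. l2inner h (G k))"
proof (induction S rule: infinite_finite_induct)
  case (insert x S)
  then have "l2inner h (\<lambda>n. G x n + (\<Sum>k\<in>S. G k n)) = l2inner h (G x) + (\<Sum>k\<in>S. l2inner h (G k))"
    by (simp add: l2inner_add_right l2_sum)
  then show ?case using insert.hyps by simp
qed (simp_all add: l2inner_def)

lemma l2inner_cnj_commute:
  assumes "f \<in> l2" "g \<in> l2"
  shows "l2inner f g = cnj (l2inner g f)"
proof -
  have "(\<lambda>n. cnj (g n) * f n) sums l2inner g f"
    unfolding l2inner_def by (rule summable_sums[OF summable_l2inner[OF assms(2,1)]])
  then have "(\<lambda>n. cnj (cnj (g n) * f n)) sums cnj (l2inner g f)"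
    by (rule sums_cnj[THEN iffD2])
  then have "(\<lambda>n. cnj (f n) * g n) sums cnj (l2inner g f)"
    by (simp add: mult.commute)
  then show ?thesis unfolding l2inner_def by (rule sums_unique[symmetric])
qed

lemma l2inner_lincomb_left:
  assumes "f \<in> l2" "g \<in> l2" "h \<in> l2" "z \<in> l2"
  shows "l2inner (\<lambda>n. a * f n + b * g n + c * h n) z
    = cnj a * l2inner f z + cnj b * l2inner g z + cnj c * l2inner h z"
  using assms by (simp add: l2inner_add_left l2inner_scale_left l2_add l2_scale)

lemma l2inner_lincomb_right:
  assumes "f \<in> l2" "g \<in> l2" "h \<in> l2" "z \<in> l2"
  shows "l2inner z (\<lambda>n. a * f n + b * g n + c * h n)
    = a * l2inner z f + b * l2inner z g + c * l2inner z h"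
  using assms by (simp add: l2inner_add_right l2inner_scale_right l2_add l2_scale)

definition l2_tendsto :: "(nat \<Rightarrow> nat \<Rightarrow> complex) \<Rightarrow> (nat \<Rightarrow> complex) \<Rightarrow> bool" where
  "l2_tendsto X \<psi> \<longleftrightarrow> (\<lambda>K. l2norm (\<lambda>n. X K n - \<psi> n)) \<longlonglongrightarrow> 0"

lemma l2_tendsto_coord:
  assumes "\<And>K. X K \<in> l2" "\<psi> \<in> l2" "l2_tendsto X \<psi>"
  shows "(\<lambda>K. X K p) \<longlonglongrightarrow> \<psi> p"
proof -
  have "(\<lambda>K. X K p - \<psi> p) \<longlonglongrightarrow> 0"
  proof (rule Lim_null_comparison)
    show "\<forall>\<^sub>F K in sequentially. norm (X K p - \<psi> p) \<le> l2norm (\<lambda>n. X K n - \<psi> n)"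
      using norm_le_l2norm[OF l2_diff[OF assms(1,2)]] by auto
  qed (use assms(3) in \<open>simp add: l2_tendsto_def\<close>)
  then show ?thesis by (rule LIM_zero_cancel)
qed

lemma l2_tendsto_unique:
  assumes "\<And>K. X K \<in> l2" "\<psi>\<^sub>1 \<in> l2" "l2_tendsto X \<psi>\<^sub>1" "\<psi>\<^sub>2 \<in> l2" "l2_tendsto X \<psi>\<^sub>2"
  shows "\<psi>\<^sub>1 = \<psi>\<^sub>2"
  using LIMSEQ_unique[OF l2_tendsto_coord[OF assms(1-3)] l2_tendsto_coord[OF assms(1,4,5)]] by blast

lemma l2_tendsto_add:
  assumes "\<And>K. X K \<in> l2" "\<And>K. Y K \<in> l2" "\<psi>\<^sub>1 \<in> l2" "\<psi>\<^sub>2 \<in> l2"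
    and "l2_tendsto X \<psi>\<^sub>1" "l2_tendsto Y \<psi>\<^sub>2"
  shows "l2_tendsto (\<lambda>K n. X K n + Y K n) (\<lambda>n. \<psi>\<^sub>1 n + \<psi>\<^sub>2 n)"
  unfolding l2_tendsto_def
proof (rule Lim_null_comparison)
  show "\<forall>\<^sub>F K in sequentially. norm (l2norm (\<lambda>n. X K n + Y K n - (\<psi>\<^sub>1 n + \<psi>\<^sub>2 n)))
        \<le> l2norm (\<lambda>n. X K n - \<psi>\<^sub>1 n) + l2norm (\<lambda>n. Y K n - \<psi>\<^sub>2 n)"
  proof (intro always_eventually allI)
    fix K
    have "(\<lambda>n. X K n + Y K n - (\<psi>\<^sub>1 n + \<psi>\<^sub>2 n)) = (\<lambda>n. (X K n - \<psi>\<^sub>1 n) + (Y K n - \<psi>\<^sub>2 n))"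
      by (simp add: algebra_simps)
    moreover have "(\<lambda>n. X K n - \<psi>\<^sub>1 n) \<in> l2" "(\<lambda>n. Y K n - \<psi>\<^sub>2 n) \<in> l2"
      using assms by (auto intro: l2_diff)
    ultimately show "norm (l2norm (\<lambda>n. X K n + Y K n - (\<psi>\<^sub>1 n + \<psi>\<^sub>2 n)))
        \<le> l2norm (\<lambda>n. X K n - \<psi>\<^sub>1 n) + l2norm (\<lambda>n. Y K n - \<psi>\<^sub>2 n)"
      using l2norm_triangle l2norm_nonneg l2_add by simp
  qed
  show "(\<lambda>K. l2norm (\<lambda>n. X K n - \<psi>\<^sub>1 n) + l2norm (\<lambda>n. Y K n - \<psi>\<^sub>2 n)) \<longlonglongrightarrow> 0"
    using assms(5,6) unfolding l2_tendsto_def by (simp add: tendsto_add_zero)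
qed

lemma l2_tendsto_scale:
  assumes "\<And>K. X K \<in> l2" "\<psi> \<in> l2" "l2_tendsto X \<psi>"
  shows "l2_tendsto (\<lambda>K n. c * X K n) (\<lambda>n. c * \<psi> n)"
proof -
  have "l2norm (\<lambda>n. c * X K n - c * \<psi> n) = cmod c * l2norm (\<lambda>n. X K n - \<psi> n)" for K
    using l2norm_scale[OF l2_diff[OF assms(1,2)], of c K] by (simp add: right_diff_distrib)
  moreover have "(\<lambda>K. cmod c * l2norm (\<lambda>n. X K n - \<psi> n)) \<longlonglongrightarrow> cmod c * 0"
    using assms(3) unfolding l2_tendsto_def by (intro tendsto_mult) auto
  ultimately show ?thesis unfolding l2_tendsto_def by simp
qed

lemma l2_tendsto_l2inner_left:
  assumes "\<And>K. X K \<in> l2" "\<psi> \<in> l2" "l2_tendsto X \<psi>" "h \<in> l2"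
  shows "(\<lambda>K. l2inner (X K) h) \<longlonglongrightarrow> l2inner \<psi> h"
proof -
  have "(\<lambda>K. l2inner (X K) h - l2inner \<psi> h) \<longlonglongrightarrow> 0"
  proof (rule Lim_null_comparison)
    show "\<forall>\<^sub>F K in sequentially.
        norm (l2inner (X K) h - l2inner \<psi> h) \<le> l2norm (\<lambda>n. X K n - \<psi> n) * l2norm h"
      using norm_l2inner_le[OF l2_diff[OF assms(1,2)] assms(4)] l2inner_diff_left[OF assms(1,2,4)]
      by auto
    show "(\<lambda>K. l2norm (\<lambda>n. X K n - \<psi> n) * l2norm h) \<longlonglongrightarrow> 0"
      using assms(3) unfolding l2_tendsto_def by (simp add: tendsto_mult_left_zero)
  qed
  then show ?thesis by (rule LIM_zero_cancel)
qed

lemma l2_tendsto_l2inner_right: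
  assumes "\<And>K. X K \<in> l2" "\<psi> \<in> l2" "l2_tendsto X \<psi>" "h \<in> l2"
  shows "(\<lambda>K. l2inner h (X K)) \<longlonglongrightarrow> l2inner h \<psi>"
proof -
  have "l2inner h (X K) = cnj (l2inner (X K) h)" for K
    using l2inner_cnj_commute assms by blast
  moreover have "l2inner h \<psi> = cnj (l2inner \<psi> h)"
    using l2inner_cnj_commute assms by blast
  ultimately show ?thesis using tendsto_cnj[OF l2_tendsto_l2inner_left[OF assms]] by simp
qed

section \<open>The logarithm series of a linear operator\<close>

definition log_partial_sum ::
  "complex \<Rightarrow> ((nat \<Rightarrow> complex) \<Rightarrow> (nat \<Rightarrow> complex)) \<Rightarrow> (nat \<Rightarrow> complex) \<Rightarrow> nat \<Rightarrow> nat \<Rightarrow> complex"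
  where "log_partial_sum w A \<phi> K = (\<lambda>n. \<Sum>k=1..K. (1 / of_nat k) * (inverse w)^k * (A ^^ k) \<phi> n)"

definition log_series ::
  "complex \<Rightarrow> ((nat \<Rightarrow> complex) \<Rightarrow> (nat \<Rightarrow> complex)) \<Rightarrow> (nat \<Rightarrow> complex) \<Rightarrow> nat \<Rightarrow> complex"
  where "log_series w A \<phi> = (THE \<psi>. log_series_conv w A \<phi> \<psi>)"

lemma log_series_conv_iff:
  "log_series_conv w A \<phi> \<psi> \<longleftrightarrow> \<psi> \<in> l2 \<and> l2_tendsto (log_partial_sum w A \<phi>) \<psi>"
  by (simp add: log_series_conv_def l2_tendsto_def log_partial_sum_def)

lemma Log_op_eq: "Log_op w A \<phi> = (\<lambda>n. Ln w * \<phi> n - log_series w A \<phi> n)"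
  by (simp add: Log_op_def log_series_def)

locale l2_linear_op =
  fixes A :: "(nat \<Rightarrow> complex) \<Rightarrow> (nat \<Rightarrow> complex)"
  assumes maps_l2: "f \<in> l2 \<Longrightarrow> A f \<in> l2"
    and additive: "A (\<lambda>n. f n + g n) = (\<lambda>n. A f n + A g n)"
    and homogeneous: "A (\<lambda>n. c * f n) = (\<lambda>n. c * A f n)"
begin

lemma funpow_l2: "f \<in> l2 \<Longrightarrow> (A ^^ k) f \<in> l2"
  by (induction k) (simp_all add: maps_l2)

lemma funpow_additive: "(A ^^ k) (\<lambda>n. f n + g n) = (\<lambda>n. (A ^^ k) f n + (A ^^ k) g n)"
  by (induction k) (simp_all add: additive)

lemma funpow_homogeneous: "(A ^^ k) (\<lambda>n. c * f n) = (\<lambda>n. c * (A ^^ k) f n)"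
  by (induction k) (simp_all add: homogeneous)

lemma log_partial_sum_l2: "\<phi> \<in> l2 \<Longrightarrow> log_partial_sum w A \<phi> K \<in> l2"
  unfolding log_partial_sum_def by (intro l2_sum l2_scale funpow_l2)

lemma Log_dom_iff:
  "\<phi> \<in> Log_dom w l2 A \<longleftrightarrow> \<phi> \<in> l2 \<and> (\<exists>\<psi>. \<psi> \<in> l2 \<and> l2_tendsto (log_partial_sum w A \<phi>) \<psi>)"
proof
  assume "\<phi> \<in> Log_dom w l2 A"
  then have "(A ^^ 0) \<phi> \<in> l2" "\<exists>\<psi>. log_series_conv w A \<phi> \<psi>"
    unfolding Log_dom_def by blast+
  then show "\<phi> \<in> l2 \<and> (\<exists>\<psi>. \<psi> \<in> l2 \<and> l2_tendsto (log_partial_sum w A \<phi>) \<psi>)"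
    by (simp add: log_series_conv_iff)
qed (auto simp: Log_dom_def log_series_conv_iff funpow_l2)

lemma log_series_eqI:
  assumes "\<phi> \<in> l2" "\<psi> \<in> l2" "l2_tendsto (log_partial_sum w A \<phi>) \<psi>"
  shows "log_series w A \<phi> = \<psi>"
  unfolding log_series_def
proof (rule the_equality)
  show "log_series_conv w A \<phi> \<psi>" using assms by (simp add: log_series_conv_iff)
  show "\<psi>' = \<psi>" if "log_series_conv w A \<phi> \<psi>'" for \<psi>'
    using that assms log_partial_sum_l2[OF assms(1)]
    by (intro l2_tendsto_unique[of "log_partial_sum w A \<phi>"]) (auto simp: log_series_conv_iff)
qed

lemma Log_domD:
  assumes "\<phi> \<in> Log_dom w l2 A"
  shows "\<phi> \<in> l2" "log_series w A \<phi> \<in> l2" "l2_tendsto (log_partial_sum w A \<phi>) (log_series w A \<phi>)"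
  using assms log_series_eqI by (auto simp: Log_dom_iff)

lemma log_partial_sum_tendsto_coord:
  "\<phi> \<in> Log_dom w l2 A \<Longrightarrow> (\<lambda>K. log_partial_sum w A \<phi> K p) \<longlonglongrightarrow> log_series w A \<phi> p"
  using Log_domD log_partial_sum_l2 by (intro l2_tendsto_coord) auto

lemma log_partial_sum_add:
  "log_partial_sum w A (\<lambda>n. f n + g n) K = (\<lambda>n. log_partial_sum w A f K n + log_partial_sum w A g K n)"
  unfolding log_partial_sum_def by (simp add: funpow_additive distrib_left sum.distrib)

lemma log_partial_sum_scale:
  "log_partial_sum w A (\<lambda>n. c * f n) K = (\<lambda>n. c * log_partial_sum w A f K n)"
  unfolding log_partial_sum_def by (simp add: funpow_homogeneous sum_distrib_left algebra_simps)

lemma Log_dom_add: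
  assumes "f \<in> Log_dom w l2 A" "g \<in> Log_dom w l2 A"
  shows "(\<lambda>n. f n + g n) \<in> Log_dom w l2 A"
    and "log_series w A (\<lambda>n. f n + g n) = (\<lambda>n. log_series w A f n + log_series w A g n)"
proof -
  note F = Log_domD[OF assms(1)] and G = Log_domD[OF assms(2)]
  have lim: "l2_tendsto (log_partial_sum w A (\<lambda>n. f n + g n)) (\<lambda>n. log_series w A f n + log_series w A g n)"
    unfolding log_partial_sum_add using F G by (intro l2_tendsto_add log_partial_sum_l2)
  have "(\<lambda>n. f n + g n) \<in> l2" "(\<lambda>n. log_series w A f n + log_series w A g n) \<in> l2"
    using F G by (auto intro: l2_add)
  with lim show "(\<lambda>n. f n + g n) \<in> Log_dom w l2 A"
    and "log_series w A (\<lambda>n. f n + g n) = (\<lambda>n. log_series w A f n + log_series w A g n)"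
    by (auto simp: Log_dom_iff log_series_eqI)
qed

lemma Log_dom_scale:
  assumes "f \<in> Log_dom w l2 A"
  shows "(\<lambda>n. c * f n) \<in> Log_dom w l2 A"
    and "log_series w A (\<lambda>n. c * f n) = (\<lambda>n. c * log_series w A f n)"
proof -
  note F = Log_domD[OF assms]
  have lim: "l2_tendsto (log_partial_sum w A (\<lambda>n. c * f n)) (\<lambda>n. c * log_series w A f n)"
    unfolding log_partial_sum_scale using F by (intro l2_tendsto_scale log_partial_sum_l2)
  have "(\<lambda>n. c * f n) \<in> l2" "(\<lambda>n. c * log_series w A f n) \<in> l2"
    using F by (auto intro: l2_scale)
  with lim show "(\<lambda>n. c * f n) \<in> Log_dom w l2 A"
    and "log_series w A (\<lambda>n. c * f n) = (\<lambda>n. c * log_series w A f n)"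
    by (auto simp: Log_dom_iff log_series_eqI)
qed

lemma Log_dom_zero: "(\<lambda>n. 0) \<in> Log_dom w l2 A"
proof -
  have "log_partial_sum w A (\<lambda>n. 0) K = (\<lambda>n. 0)" for K
    using log_partial_sum_scale[of w 0 "\<lambda>n. 0" K] by simp
  then have "l2_tendsto (log_partial_sum w A (\<lambda>n. 0)) (\<lambda>n. 0)"
    by (simp add: l2_tendsto_def l2norm_zero)
  then show ?thesis using l2_zero by (auto simp: Log_dom_iff)
qed

end

lemma l2_shift_left: "f \<in> l2 \<Longrightarrow> (\<lambda>n. f (n + j)) \<in> l2"
  unfolding l2_def by (simp add: summable_iff_shift[of "\<lambda>n. (cmod (f n))^2" j])

lemma l2_shift_right:
  assumes "f \<in> l2"
  shows "(\<lambda>n. if j \<le> n then f (n - j) else 0) \<in> l2"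
proof -
  have "summable (\<lambda>n. (cmod (if j \<le> n + j then f (n + j - j) else 0))^2)"
    using assms by (simp add: l2_def)
  then show ?thesis unfolding l2_def mem_Collect_eq by (rule summable_iff_shift[THEN iffD1])
qed

lemma funpow_lshift: "(lshift ^^ j) f = (\<lambda>n. f (n + j))"
  by (induction j arbitrary: f) (auto simp: lshift_def)

lemma funpow_rshift: "(rshift ^^ j) f = (\<lambda>n. if j \<le> n then f (n - j) else 0)"
  by (induction j) (auto simp: rshift_def fun_eq_iff)

lemma funpow_funpow_lshift: "((lshift ^^ m) ^^ k) f = (\<lambda>n. f (n + m * k))"
  by (simp add: funpow_mult funpow_lshift)

lemma funpow_funpow_rshift:
  "((rshift ^^ m) ^^ k) f = (\<lambda>n. if m * k \<le> n then f (n - m * k) else 0)"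
  by (simp add: funpow_mult funpow_rshift)

interpretation lshift_power: l2_linear_op "lshift ^^ m" for m
  by unfold_locales (auto simp: funpow_lshift l2_shift_left)

interpretation rshift_power: l2_linear_op "rshift ^^ m" for m
  by unfold_locales (auto simp: funpow_rshift l2_shift_right fun_eq_iff)

lemma l2inner_shift_adjoint:
  assumes "f \<in> l2" "g \<in> l2"
  shows "l2inner (\<lambda>n. f (n + j)) g = l2inner f (\<lambda>n. if j \<le> n then g (n - j) else 0)"
proof -
  let ?h = "\<lambda>n. cnj (f n) * (if j \<le> n then g (n - j) else 0)"
  have "summable ?h" using summable_l2inner[OF assms(1) l2_shift_right[OF assms(2)]] by simp
  then have "suminf ?h = (\<Sum>n. ?h (n + j)) + (\<Sum>i<j. ?h i)" by (rule suminf_split_initial_segment)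
  then show ?thesis unfolding l2inner_def by simp
qed

lemma log_partial_sum_shift_adjoint:
  assumes "\<phi> \<in> l2" "z \<in> l2"
  shows "l2inner (log_partial_sum w (lshift ^^ m) \<phi> K) z
       = l2inner \<phi> (log_partial_sum (cnj w) (rshift ^^ m) z K)"
proof -
  have "l2inner (log_partial_sum w (lshift ^^ m) \<phi> K) z
      = (\<Sum>k=1..K. cnj (1 / of_nat k * inverse w ^ k) * l2inner (((lshift ^^ m) ^^ k) \<phi>) z)"
    unfolding log_partial_sum_def using assms
    by (simp only: l2inner_sum_left l2inner_scale_left l2_scale lshift_power.funpow_l2)
  also have "\<dots> = (\<Sum>k=1..K. (1 / of_nat k * inverse (cnj w) ^ k) * l2inner \<phi> (((rshift ^^ m) ^^ k) z))"
    using assms by (simp add: funpow_funpow_lshift funpow_funpow_rshift l2inner_shift_adjoint)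
  also have "\<dots> = l2inner \<phi> (log_partial_sum (cnj w) (rshift ^^ m) z K)"
    unfolding log_partial_sum_def using assms
    by (simp only: l2inner_sum_right l2inner_scale_right l2_scale rshift_power.funpow_l2)
  finally show ?thesis .
qed

lemma log_series_shift_adjoint:
  assumes "\<phi> \<in> Log_dom w l2 (lshift ^^ m)" "z \<in> Log_dom (cnj w) l2 (rshift ^^ m)"
  shows "l2inner (log_series w (lshift ^^ m) \<phi>) z = l2inner \<phi> (log_series (cnj w) (rshift ^^ m) z)"
proof -
  note P = lshift_power.Log_domD[OF assms(1)] and Q = rshift_power.Log_domD[OF assms(2)]
  have "(\<lambda>K. l2inner (log_partial_sum w (lshift ^^ m) \<phi> K) z)
      \<longlonglongrightarrow> l2inner (log_series w (lshift ^^ m) \<phi>) z"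
    using P Q by (intro l2_tendsto_l2inner_left lshift_power.log_partial_sum_l2)
  moreover have "(\<lambda>K. l2inner \<phi> (log_partial_sum (cnj w) (rshift ^^ m) z K))
      \<longlonglongrightarrow> l2inner \<phi> (log_series (cnj w) (rshift ^^ m) z)"
    using P Q by (intro l2_tendsto_l2inner_right rshift_power.log_partial_sum_l2)
  ultimately show ?thesis
    using P(1) Q(1) by (simp add: log_partial_sum_shift_adjoint LIMSEQ_unique)
qed

lemma Lmw_eq:
  "Lmw m \<omega> \<phi> = (\<lambda>n. (\<i> / of_nat m * (Ln \<omega> - Ln (cnj \<omega>))) * \<phi> n
      + (- (\<i> / of_nat m)) * log_series \<omega> (lshift ^^ m) \<phi> n
      + (\<i> / of_nat m) * log_series (cnj \<omega>) (rshift ^^ m) \<phi> n)"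
  unfolding Lmw_def Log_op_eq by (simp add: fun_eq_iff algebra_simps)

lemma Lmw_domD:
  assumes "\<phi> \<in> Lmw_dom m \<omega>"
  shows "\<phi> \<in> Log_dom \<omega> l2 (lshift ^^ m)" "\<phi> \<in> Log_dom (cnj \<omega>) l2 (rshift ^^ m)" "\<phi> \<in> l2"
    and "log_series \<omega> (lshift ^^ m) \<phi> \<in> l2" "log_series (cnj \<omega>) (rshift ^^ m) \<phi> \<in> l2"
  using assms lshift_power.Log_domD rshift_power.Log_domD unfolding Lmw_dom_def by auto

lemma Lmw_l2: "\<phi> \<in> Lmw_dom m \<omega> \<Longrightarrow> Lmw m \<omega> \<phi> \<in> l2"
  unfolding Lmw_eq using Lmw_domD by (intro l2_add l2_scale) auto

lemma Lmw_symmetric: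
  assumes "\<omega> \<noteq> 0" "\<phi> \<in> Lmw_dom m \<omega>" "z \<in> Lmw_dom m \<omega>"
  shows "l2inner (Lmw m \<omega> \<phi>) z = l2inner \<phi> (Lmw m \<omega> z)"
proof -
  note P = Lmw_domD[OF assms(2)] and Q = Lmw_domD[OF assms(3)]
  have "Re (Ln \<omega> - Ln (cnj \<omega>)) = 0"
    using assms(1) by simp
  then have real_coeff: "cnj (\<i> / of_nat m * (Ln \<omega> - Ln (cnj \<omega>))) = \<i> / of_nat m * (Ln \<omega> - Ln (cnj \<omega>))"
    by (simp add: complex_eq_iff diff_divide_distrib)
  have "l2inner (log_series (cnj \<omega>) (rshift ^^ m) \<phi>) z
      = cnj (l2inner (log_series \<omega> (lshift ^^ m) z) \<phi>)"
    using l2inner_cnj_commute[OF P(5) Q(3)] log_series_shift_adjoint[OF Q(1) P(2)] by simp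
  also have "\<dots> = l2inner \<phi> (log_series \<omega> (lshift ^^ m) z)"
    by (rule l2inner_cnj_commute[OF P(3) Q(4), symmetric])
  finally show ?thesis
    unfolding Lmw_eq l2inner_lincomb_left[OF P(3-5) Q(3)] l2inner_lincomb_right[OF Q(3-5) P(3)]
    using real_coeff log_series_shift_adjoint[OF P(1) Q(2)] by simp
qed

lemma Lmw_dom_add:
  assumes "f \<in> Lmw_dom m \<omega>" "g \<in> Lmw_dom m \<omega>"
  shows "(\<lambda>n. f n + g n) \<in> Lmw_dom m \<omega>"
    and "Lmw m \<omega> (\<lambda>n. f n + g n) = (\<lambda>n. Lmw m \<omega> f n + Lmw m \<omega> g n)"
proof -
  note F = Lmw_domD[OF assms(1)] and G = Lmw_domD[OF assms(2)]
  note L = lshift_power.Log_dom_add[OF F(1) G(1)] and R = rshift_power.Log_dom_add[OF F(2) G(2)]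
  show "(\<lambda>n. f n + g n) \<in> Lmw_dom m \<omega>" using L R by (simp add: Lmw_dom_def)
  show "Lmw m \<omega> (\<lambda>n. f n + g n) = (\<lambda>n. Lmw m \<omega> f n + Lmw m \<omega> g n)"
    unfolding Lmw_eq L(2) R(2) by (rule ext) (simp only: distrib_left add_ac)
qed

lemma Lmw_dom_scale:
  assumes "f \<in> Lmw_dom m \<omega>"
  shows "(\<lambda>n. c * f n) \<in> Lmw_dom m \<omega>"
    and "Lmw m \<omega> (\<lambda>n. c * f n) = (\<lambda>n. c * Lmw m \<omega> f n)"
proof -
  note F = Lmw_domD[OF assms]
  note L = lshift_power.Log_dom_scale[OF F(1)] and R = rshift_power.Log_dom_scale[OF F(2)]
  show "(\<lambda>n. c * f n) \<in> Lmw_dom m \<omega>" using L R by (simp add: Lmw_dom_def)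
  show "Lmw m \<omega> (\<lambda>n. c * f n) = (\<lambda>n. c * Lmw m \<omega> f n)"
    unfolding Lmw_eq L(2) R(2) by (rule ext) (simp only: distrib_left mult.left_commute)
qed

lemma Lmw_dom_zero: "(\<lambda>n. 0) \<in> Lmw_dom m \<omega>"
  by (simp add: Lmw_dom_def lshift_power.Log_dom_zero rshift_power.Log_dom_zero)

section \<open>The commutation relation\<close>

lemma inverse_cnj_unimodular: "cmod \<omega> = 1 \<Longrightarrow> inverse (cnj \<omega>) = \<omega>"
  by (metis complex_norm_square inverse_unique mult.commute of_real_1 power_one)

lemma log_partial_sum_lshift_commutator:
  "log_partial_sum w (lshift ^^ m) (numop \<phi>) K p - of_nat p * log_partial_sum w (lshift ^^ m) \<phi> K p
    = of_nat m * (\<Sum>k=1..K. (inverse w)^k * \<phi> (p + m * k))"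
proof -
  define a where "a = inverse w"
  have "log_partial_sum w (lshift ^^ m) (numop \<phi>) K p - of_nat p * log_partial_sum w (lshift ^^ m) \<phi> K p
      = (\<Sum>k=1..K. (1 / of_nat k) * a^k * (of_nat (p + m * k) * \<phi> (p + m * k))
          - of_nat p * ((1 / of_nat k) * a^k * \<phi> (p + m * k)))"
    unfolding log_partial_sum_def funpow_funpow_lshift numop_def a_def
    by (simp add: sum_subtractf sum_distrib_left)
  also have "\<dots> = (\<Sum>k=1..K. of_nat m * (a^k * \<phi> (p + m * k)))"
    by (rule sum.cong) (auto simp: field_simps)
  finally show ?thesis by (simp add: sum_distrib_left a_def)
qed

lemma log_partial_sum_rshift_commutator:
  "of_nat p * log_partial_sum w (rshift ^^ m) \<phi> K p - log_partial_sum w (rshift ^^ m) (numop \<phi>) K p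
    = of_nat m * (\<Sum>k=1..K. if m * k \<le> p then (inverse w)^k * \<phi> (p - m * k) else 0)"
proof -
  define a where "a = inverse w"
  have "of_nat p * log_partial_sum w (rshift ^^ m) \<phi> K p - log_partial_sum w (rshift ^^ m) (numop \<phi>) K p
      = (\<Sum>k=1..K. of_nat p * ((1 / of_nat k) * a^k * (if m * k \<le> p then \<phi> (p - m * k) else 0))
          - (1 / of_nat k) * a^k * (if m * k \<le> p then of_nat (p - m * k) * \<phi> (p - m * k) else 0))"
    unfolding log_partial_sum_def funpow_funpow_rshift numop_def a_def
    by (simp add: sum_subtractf sum_distrib_left)
  also have "\<dots> = (\<Sum>k=1..K. of_nat m * (if m * k \<le> p then a^k * \<phi> (p - m * k) else 0))"
    by (rule sum.cong) (auto simp: field_simps of_nat_diff)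
  finally show ?thesis unfolding a_def by (simp add: sum_distrib_left)
qed

lemma sum_atLeast1_atMost_Suc_shift:
  "(\<Sum>k=1..Suc K. F k) = F 1 + (\<Sum>k=1..K. F (Suc k))"
  by (induction K) (auto simp: ac_simps)

lemma lshift_log_commutator_recursion:
  assumes "w \<noteq> 0" "m \<noteq> 0"
    and "\<phi> \<in> Log_dom w l2 (lshift ^^ m)" "numop \<phi> \<in> Log_dom w l2 (lshift ^^ m)"
  defines "u \<equiv> \<lambda>p. (log_series w (lshift ^^ m) (numop \<phi>) p
                    - of_nat p * log_series w (lshift ^^ m) \<phi> p) / of_nat m"
  shows "u (p + m) = w * u p - \<phi> (p + m)"
proof -
  define U where "U K q = (\<Sum>k=1..K. (inverse w)^k * \<phi> (q + m * k))" for K q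
  have lim: "(\<lambda>K. U K q) \<longlonglongrightarrow> u q" for q
  proof -
    have "(\<lambda>K. (log_partial_sum w (lshift ^^ m) (numop \<phi>) K q
              - of_nat q * log_partial_sum w (lshift ^^ m) \<phi> K q) / of_nat m) \<longlonglongrightarrow> u q"
      unfolding u_def using assms by (intro tendsto_intros lshift_power.log_partial_sum_tendsto_coord) auto
    then show ?thesis using assms(2) by (simp add: log_partial_sum_lshift_commutator U_def)
  qed
  have "U (Suc K) p = inverse w * \<phi> (p + m) + inverse w * U K (p + m)" for K
    unfolding U_def sum_atLeast1_atMost_Suc_shift sum_distrib_left
    by (simp add: algebra_simps)
  then have "(\<lambda>K. U (Suc K) p) \<longlonglongrightarrow> inverse w * \<phi> (p + m) + inverse w * u (p + m)"
    using lim by (simp add: tendsto_intros)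
  with LIMSEQ_Suc[OF lim] have "u p = inverse w * \<phi> (p + m) + inverse w * u (p + m)"
    by (rule LIMSEQ_unique)
  then show ?thesis using assms(1) by (simp add: field_simps)
qed

lemma rshift_log_commutator_recursion:
  assumes "m \<noteq> 0"
    and "\<phi> \<in> Log_dom w l2 (rshift ^^ m)" "numop \<phi> \<in> Log_dom w l2 (rshift ^^ m)"
  defines "v \<equiv> \<lambda>p. (of_nat p * log_series w (rshift ^^ m) \<phi> p
                    - log_series w (rshift ^^ m) (numop \<phi>) p) / of_nat m"
  shows "v (p + m) = inverse w * (\<phi> p + v p)"
proof -
  define V where "V K q = (\<Sum>k=1..K. if m * k \<le> q then (inverse w)^k * \<phi> (q - m * k) else 0)" for K q
  have lim: "(\<lambda>K. V K q) \<longlonglongrightarrow> v q" for q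
  proof -
    have "(\<lambda>K. (of_nat q * log_partial_sum w (rshift ^^ m) \<phi> K q
              - log_partial_sum w (rshift ^^ m) (numop \<phi>) K q) / of_nat m) \<longlonglongrightarrow> v q"
      unfolding v_def using assms by (intro tendsto_intros rshift_power.log_partial_sum_tendsto_coord) auto
    then show ?thesis using assms(1) by (simp add: log_partial_sum_rshift_commutator V_def)
  qed
  have "V (Suc K) (p + m) = inverse w * \<phi> p + inverse w * V K p" for K
    unfolding V_def sum_atLeast1_atMost_Suc_shift sum_distrib_left
    by (auto intro!: sum.cong)
  then have "(\<lambda>K. V (Suc K) (p + m)) \<longlonglongrightarrow> inverse w * \<phi> p + inverse w * v p"
    using lim by (simp add: tendsto_intros)
  with LIMSEQ_Suc[OF lim[of "p + m"]] have "v (p + m) = inverse w * \<phi> p + inverse w * v p"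
    by (rule LIMSEQ_unique)
  then show ?thesis by (simp add: distrib_left)
qed

lemma l2_quasiperiodic_eq_0:
  assumes "g \<in> l2" "cmod \<omega> = 1" "m \<noteq> 0" "\<And>p. g (p + m) = \<omega> * g p"
  shows "g p = 0"
proof -
  have period: "g (p + m * j) = \<omega>^j * g p" for j
  proof (induction j)
    case (Suc j)
    have "g (p + m * Suc j) = g ((p + m * j) + m)" by (simp add: algebra_simps)
    then show ?case by (simp add: assms(4) Suc)
  qed simp
  have "(\<lambda>n. (cmod (g n))^2) \<longlonglongrightarrow> 0"
    using assms(1) unfolding l2_def by (intro summable_LIMSEQ_zero) simp
  moreover have "strict_mono (\<lambda>j. p + m * j)"
    using assms(3) by (intro strict_monoI) simp
  ultimately have "((\<lambda>n. (cmod (g n))^2) \<circ> (\<lambda>j. p + m * j)) \<longlonglongrightarrow> 0"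
    by (rule LIMSEQ_subseq_LIMSEQ)
  moreover have "(\<lambda>n. (cmod (g n))^2) \<circ> (\<lambda>j. p + m * j) = (\<lambda>j. (cmod (g p))^2)"
    using assms(2) by (simp add: o_def period norm_mult norm_power)
  ultimately show ?thesis by (simp add: LIMSEQ_const_iff)
qed

lemma Lmw_commutator:
  assumes "cmod \<omega> = 1" "m \<ge> 1"
    and "\<phi> \<in> Lmw_dom m \<omega>" "Lmw m \<omega> \<phi> \<in> numop_dom" "numop \<phi> \<in> Lmw_dom m \<omega>"
  shows "(\<lambda>n. numop (Lmw m \<omega> \<phi>) n - Lmw m \<omega> (numop \<phi>) n) = (\<lambda>n. - \<i> * \<phi> n)"
proof -
  note P = Lmw_domD[OF assms(3)] and Q = Lmw_domD[OF assms(5)]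
  have m: "m \<noteq> 0" "(of_nat m :: complex) \<noteq> 0" and \<omega>: "\<omega> \<noteq> 0"
    using assms(1,2) by auto
  define u where "u p = (log_series \<omega> (lshift ^^ m) (numop \<phi>) p
                         - of_nat p * log_series \<omega> (lshift ^^ m) \<phi> p) / of_nat m" for p
  define v where "v p = (of_nat p * log_series (cnj \<omega>) (rshift ^^ m) \<phi> p
                         - log_series (cnj \<omega>) (rshift ^^ m) (numop \<phi>) p) / of_nat m" for p
  define g where "g p = u p + v p + \<phi> p" for p
  have commutator: "numop (Lmw m \<omega> \<phi>) p - Lmw m \<omega> (numop \<phi>) p = \<i> * (u p + v p)" for p
    unfolding u_def v_def numop_def Lmw_eq using m by (simp add: field_simps)
  have "g = (\<lambda>p. - \<i> * (numop (Lmw m \<omega> \<phi>) p - Lmw m \<omega> (numop \<phi>) p) + \<phi> p)"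
    unfolding g_def commutator by (simp add: fun_eq_iff algebra_simps)
  moreover have "numop (Lmw m \<omega> \<phi>) \<in> l2" using assms(4) by (simp add: numop_dom_def)
  ultimately have "g \<in> l2"
    using Lmw_l2[OF assms(5)] P(3) by (simp add: l2_add l2_scale l2_diff)
  moreover have "g (p + m) = \<omega> * g p" for p
    using lshift_log_commutator_recursion[OF \<omega> m(1) P(1) Q(1), of p]
      rshift_log_commutator_recursion[OF m(1) P(2) Q(2), of p]
    unfolding g_def u_def[symmetric] v_def[symmetric] inverse_cnj_unimodular[OF assms(1)]
    by (simp add: algebra_simps)
  ultimately have "g p = 0" for p
    using l2_quasiperiodic_eq_0 assms(1) m(1) by blast
  then show ?thesis
    by (simp add: fun_eq_iff commutator g_def add_eq_0_iff algebra_simps)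
qed

section \<open>Density of the CCR domain\<close>

definition delta :: "nat \<Rightarrow> nat \<Rightarrow> complex" where
  "delta j p = (if p = j then 1 else 0)"

definition spread :: "nat \<Rightarrow> nat \<Rightarrow> (nat \<Rightarrow> complex) \<Rightarrow> nat \<Rightarrow> complex" where
  "spread m j F p = (if j \<le> p \<and> m dvd (p - j) then F ((p - j) div m) else 0)"

lemma l2_delta: "delta j \<in> l2"
  by (rule l2_finite_support[of "{j}"]) (auto simp: delta_def)

lemma sum_mult_delta: "(\<Sum>j\<le>M. c j * delta j p) = (if p \<le> M then c p else 0)"
proof -
  have "(\<Sum>j\<le>M. c j * delta j p) = (\<Sum>j\<in>{..M}. if j = p then c j else 0)"
    by (rule sum.cong) (auto simp: delta_def)
  then show ?thesis by simp
qed

lemma eq_add_mult_iff: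
  fixes m :: nat
  assumes "m \<ge> 1"
  shows "p = j + m * t \<longleftrightarrow> j \<le> p \<and> m dvd (p - j) \<and> t = (p - j) div m"
proof
  assume "j \<le> p \<and> m dvd (p - j) \<and> t = (p - j) div m"
  then have "j \<le> p" "p - j = m * t" by auto
  then show "p = j + m * t" by simp
qed (use assms in simp)

context
  fixes m :: nat
  assumes m_pos: "m \<ge> 1"
begin

lemma spread_at: "spread m j F (j + m * k) = F k"
  using m_pos by (simp add: spread_def)

lemma spread_eq_0:
  assumes "p \<notin> range (\<lambda>k. j + m * k)"
  shows "spread m j F p = 0"
proof (cases "j \<le> p \<and> m dvd (p - j)")
  case True
  then obtain k where "p - j = m * k" by (auto elim: dvdE)
  then have "p = j + m * k" using True by simp
  with assms show ?thesis by blast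
qed (auto simp: spread_def)

lemma l2_spread:
  assumes "F \<in> l2"
  shows "spread m j F \<in> l2" and "l2norm (spread m j F) = l2norm F"
proof -
  let ?f = "\<lambda>p. (cmod (spread m j F p))^2"
  have mono: "strict_mono (\<lambda>k. j + m * k)"
    using m_pos by (intro strict_monoI) simp
  have zero: "\<And>p. p \<notin> range (\<lambda>k. j + m * k) \<Longrightarrow> ?f p = 0"
    using spread_eq_0 by simp
  have "(\<lambda>k. ?f (j + m * k)) = (\<lambda>k. (cmod (F k))^2)"
    by (simp add: spread_at)
  then show "spread m j F \<in> l2" "l2norm (spread m j F) = l2norm F"
    using assms summable_mono_reindex[of "\<lambda>k. j + m * k" ?f, OF mono zero]
      suminf_mono_reindex[of "\<lambda>k. j + m * k" ?f, OF mono zero]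
    by (auto simp: l2_def l2norm_def)
qed

lemma spread_diff: "(\<lambda>p. spread m j F p - spread m j G p) = spread m j (\<lambda>k. F k - G k)"
  by (simp add: spread_def fun_eq_iff)

lemma numop_spread: "numop (spread m j F) = spread m j (\<lambda>k. of_nat (j + m * k) * F k)"
proof
  fix p
  show "numop (spread m j F) p = spread m j (\<lambda>k. of_nat (j + m * k) * F k) p"
  proof (cases "p \<in> range (\<lambda>k. j + m * k)")
    case True
    then show ?thesis by (auto simp: numop_def spread_at)
  qed (simp add: numop_def spread_eq_0)
qed

lemma spread_shift: "spread m (j + m) F = spread m j (\<lambda>k. if k = 0 then 0 else F (k - 1))"
proof
  fix p
  show "spread m (j + m) F p = spread m j (\<lambda>k. if k = 0 then 0 else F (k - 1)) p"
  proof (cases "p \<in> range (\<lambda>k. j + m * k)")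
    case True
    then obtain k where p: "p = j + m * k" by blast
    show ?thesis
    proof (cases k)
      case 0
      then show ?thesis using p m_pos by (simp add: spread_def spread_at)
    next
      case (Suc k')
      have p1: "p = (j + m) + m * k'" and p2: "p = j + m * Suc k'"
        using p Suc by simp_all
      have "spread m (j + m) F p = F k'"
        unfolding p1 by (rule spread_at)
      moreover have "spread m j (\<lambda>k. if k = 0 then 0 else F (k - 1)) p = F k'"
        unfolding p2 by (simp only: spread_at) simp
      ultimately show ?thesis by simp
    qed
  next
    case False
    moreover have "p \<notin> range (\<lambda>k. (j + m) + m * k)"
    proof
      assume "p \<in> range (\<lambda>k. (j + m) + m * k)"
      then obtain k where "p = j + m + m * k" by blast
      then have "p = j + m * Suc k" by simp
      with False show False by blast
    qed
    ultimately show ?thesis by (simp add: spread_eq_0)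
  qed
qed

lemma lshift_log_series_finite_support:
  assumes "f \<in> l2" "\<And>p. M < p \<Longrightarrow> f p = 0"
  shows "f \<in> Log_dom w l2 (lshift ^^ m)" and "\<And>p. M < p \<Longrightarrow> log_series w (lshift ^^ m) f p = 0"
proof -
  have vanish: "(1 / of_nat k) * (inverse w)^k * f (p + m * k) = 0" if "k \<in> {1..K} - {1..M}" for k K p
  proof -
    have "M < k" "k \<le> m * k" using that m_pos by auto
    then have "f (p + m * k) = 0" by (intro assms(2)) linarith
    then show ?thesis by simp
  qed
  have const: "log_partial_sum w (lshift ^^ m) f K = log_partial_sum w (lshift ^^ m) f M"
    if "M \<le> K" for K
    unfolding log_partial_sum_def funpow_funpow_lshift
    by (rule ext, rule sum.mono_neutral_right) (use that vanish in auto)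
  have "l2norm (\<lambda>n. log_partial_sum w (lshift ^^ m) f K n - log_partial_sum w (lshift ^^ m) f M n) = 0"
    if "M \<le> K" for K
    using const[OF that] by (simp add: l2norm_zero)
  then have "l2_tendsto (log_partial_sum w (lshift ^^ m) f) (log_partial_sum w (lshift ^^ m) f M)"
    unfolding l2_tendsto_def by (intro tendsto_eventually eventually_sequentiallyI[of M])
  moreover have "log_partial_sum w (lshift ^^ m) f M \<in> l2"
    by (rule lshift_power.log_partial_sum_l2[OF assms(1)])
  ultimately have "f \<in> Log_dom w l2 (lshift ^^ m)"
    and series: "log_series w (lshift ^^ m) f = log_partial_sum w (lshift ^^ m) f M"
    using assms(1) lshift_power.log_series_eqI by (auto simp: lshift_power.Log_dom_iff)
  then show "f \<in> Log_dom w l2 (lshift ^^ m)" by blast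
  show "log_series w (lshift ^^ m) f p = 0" if "M < p" for p
    using that assms(2) unfolding series log_partial_sum_def funpow_funpow_lshift
    by (intro sum.neutral) auto
qed

end

definition ccr_dom :: "nat \<Rightarrow> complex \<Rightarrow> (nat \<Rightarrow> complex) set" where
  "ccr_dom m \<omega> = prod_dom numop_dom (Lmw_dom m \<omega>) (Lmw m \<omega>) \<inter> prod_dom (Lmw_dom m \<omega>) numop_dom numop"

lemma ccr_dom_iff:
  "\<phi> \<in> ccr_dom m \<omega> \<longleftrightarrow>
    \<phi> \<in> Lmw_dom m \<omega> \<and> Lmw m \<omega> \<phi> \<in> numop_dom \<and> \<phi> \<in> numop_dom \<and> numop \<phi> \<in> Lmw_dom m \<omega>"
  by (auto simp: ccr_dom_def prod_dom_def)

lemma numop_add: "numop (\<lambda>n. f n + g n) = (\<lambda>n. numop f n + numop g n)"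
  by (simp add: numop_def fun_eq_iff algebra_simps)

lemma numop_scale: "numop (\<lambda>n. c * f n) = (\<lambda>n. c * numop f n)"
  by (simp add: numop_def fun_eq_iff algebra_simps)

lemma numop_dom_add: "f \<in> numop_dom \<Longrightarrow> g \<in> numop_dom \<Longrightarrow> (\<lambda>n. f n + g n) \<in> numop_dom"
  by (simp add: numop_dom_def numop_add l2_add)

lemma numop_dom_scale: "f \<in> numop_dom \<Longrightarrow> (\<lambda>n. c * f n) \<in> numop_dom"
  by (simp add: numop_dom_def numop_scale l2_scale)

lemma ccr_dom_add: "f \<in> ccr_dom m \<omega> \<Longrightarrow> g \<in> ccr_dom m \<omega> \<Longrightarrow> (\<lambda>n. f n + g n) \<in> ccr_dom m \<omega>"
  unfolding ccr_dom_iff by (simp add: Lmw_dom_add numop_dom_add numop_add)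

lemma ccr_dom_scale: "f \<in> ccr_dom m \<omega> \<Longrightarrow> (\<lambda>n. c * f n) \<in> ccr_dom m \<omega>"
  unfolding ccr_dom_iff by (simp add: Lmw_dom_scale numop_dom_scale numop_scale)

lemma ccr_dom_zero: "(\<lambda>n. 0) \<in> ccr_dom m \<omega>"
proof -
  have "Lmw m \<omega> (\<lambda>n. 0) = (\<lambda>n. 0)"
    using Lmw_dom_scale(2)[OF Lmw_dom_zero, where c = 0] by simp
  then show ?thesis
    by (simp add: ccr_dom_iff Lmw_dom_zero numop_dom_def numop_def l2_zero)
qed

lemma ccr_dom_sum: "(\<And>i. i \<in> S \<Longrightarrow> G i \<in> ccr_dom m \<omega>) \<Longrightarrow> (\<lambda>p. \<Sum>i\<in>S. G i p) \<in> ccr_dom m \<omega>"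
  by (induction S rule: infinite_finite_induct) (simp_all add: ccr_dom_zero ccr_dom_add)

lemma ccr_dom_subset_l2: "ccr_dom m \<omega> \<subseteq> l2"
  using Lmw_domD(3) ccr_dom_iff by blast

context
  fixes \<omega> :: complex and m :: nat
  assumes norm_omega: "cmod \<omega> = 1" and m_pos: "m \<ge> 1"
begin

definition log_coeff :: "nat \<Rightarrow> complex" where
  "log_coeff k = (if k = 0 then 0 else 1 / of_nat k * \<omega>^k)"

lemma l2_log_coeff: "log_coeff \<in> l2"
proof -
  have "(cmod (log_coeff k))^2 = inverse (real k ^ 2)" for k
    using norm_omega
    by (simp add: log_coeff_def norm_divide norm_power power_divide power_one_over inverse_eq_divide)
  then show ?thesis
    unfolding l2_def by (simp add: inverse_power_summable)
qed

lemma log_partial_sum_rshift_delta: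
  "log_partial_sum (cnj \<omega>) (rshift ^^ m) (delta j) K = spread m j (\<lambda>k. if k \<le> K then log_coeff k else 0)"
proof
  fix p
  have "log_partial_sum (cnj \<omega>) (rshift ^^ m) (delta j) K p
      = (\<Sum>k=1..K. if p = j + m * k then log_coeff k else 0)"
    unfolding log_partial_sum_def funpow_funpow_rshift inverse_cnj_unimodular[OF norm_omega]
    by (intro sum.cong) (auto simp: delta_def log_coeff_def)
  also have "\<dots> = spread m j (\<lambda>k. if k \<le> K then log_coeff k else 0) p"
  proof (cases "p \<in> range (\<lambda>k. j + m * k)")
    case True
    then obtain k\<^sub>0 where p: "p = j + m * k\<^sub>0" by blast
    have "(\<Sum>k=1..K. if p = j + m * k then log_coeff k else 0) = (\<Sum>k=1..K. if k = k\<^sub>0 then log_coeff k else 0)"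
      using m_pos by (intro sum.cong) (auto simp: p)
    then show ?thesis by (simp add: p spread_at[OF m_pos] log_coeff_def)
  next
    case False
    then have "p \<noteq> j + m * k" for k by blast
    then show ?thesis by (simp add: spread_eq_0[OF m_pos False])
  qed
  finally show "log_partial_sum (cnj \<omega>) (rshift ^^ m) (delta j) K p
      = spread m j (\<lambda>k. if k \<le> K then log_coeff k else 0) p" .
qed

lemma rshift_log_series_delta:
  shows "delta j \<in> Log_dom (cnj \<omega>) l2 (rshift ^^ m)"
    and "log_series (cnj \<omega>) (rshift ^^ m) (delta j) = spread m j log_coeff"
proof -
  have tail: "(\<lambda>k. - 1 * log_coeff k) \<in> l2"
    by (rule l2_scale[OF l2_log_coeff])
  have "(\<lambda>p. log_partial_sum (cnj \<omega>) (rshift ^^ m) (delta j) K p - spread m j log_coeff p)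
      = spread m j (\<lambda>k. if K < k then - 1 * log_coeff k else 0)" for K
    unfolding log_partial_sum_rshift_delta spread_diff[OF m_pos]
    by (rule arg_cong[where f = "spread m j"]) auto
  then have "l2_tendsto (log_partial_sum (cnj \<omega>) (rshift ^^ m) (delta j)) (spread m j log_coeff)"
    unfolding l2_tendsto_def
    using l2_spread(2)[OF m_pos l2_tail[OF tail]] l2norm_tail_tendsto_0[OF tail] by simp
  moreover have "spread m j log_coeff \<in> l2"
    by (rule l2_spread(1)[OF m_pos l2_log_coeff])
  ultimately show "delta j \<in> Log_dom (cnj \<omega>) l2 (rshift ^^ m)"
    and "log_series (cnj \<omega>) (rshift ^^ m) (delta j) = spread m j log_coeff"
    using l2_delta rshift_power.log_series_eqI by (auto simp: rshift_power.Log_dom_iff)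
qed

lemma delta_in_Lmw_dom: "delta j \<in> Lmw_dom m \<omega>"
proof -
  have "delta j \<in> Log_dom \<omega> l2 (lshift ^^ m)"
    by (rule lshift_log_series_finite_support(1)[OF m_pos l2_delta, of j]) (simp add: delta_def)
  then show ?thesis
    using rshift_log_series_delta(1) by (simp add: Lmw_dom_def)
qed

definition log_coeff_diff :: "nat \<Rightarrow> complex" where
  "log_coeff_diff k = log_coeff k - \<omega> * (if k = 0 then 0 else log_coeff (k - 1))"

lemma norm_log_coeff_diff:
  assumes "k \<ge> 2"
  shows "cmod (log_coeff_diff k) = 1 / (real k * (real k - 1))"
proof -
  obtain k' where k': "k = Suc k'" "k' \<ge> 1" using assms by (cases k) auto
  then have "(of_nat k' :: complex) \<noteq> 0" "(of_nat k :: complex) \<noteq> 0"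
    by (auto simp del: of_nat_Suc)
  then have "1 / of_nat k - 1 / of_nat k' = (of_real (- 1 / (real k * real k')) :: complex)"
    using k' by (simp add: field_simps)
  moreover have "log_coeff_diff k = \<omega>^k * (1 / of_nat k - 1 / of_nat k')"
    using k' by (simp add: log_coeff_diff_def log_coeff_def algebra_simps)
  ultimately have "log_coeff_diff k = \<omega>^k * of_real (- 1 / (real k * real k'))"
    by simp
  then have "cmod (log_coeff_diff k) = cmod \<omega> ^ k * \<bar>- 1 / (real k * real k')\<bar>"
    by (simp only: norm_mult norm_power norm_of_real)
  then show ?thesis
    using norm_omega k' by simp
qed

lemma l2_weighted_log_coeff_diff: "(\<lambda>k. of_nat (j + m * k) * log_coeff_diff k) \<in> l2"
  unfolding l2_def mem_Collect_eq
proof (rule summable_comparison_test)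
  define C where "C = (2 * (real j + real m))^2"
  show "summable (\<lambda>k. C * inverse (real k ^ 2))"
    by (intro summable_mult inverse_power_summable) simp
  show "\<exists>N. \<forall>k\<ge>N. norm ((cmod (of_nat (j + m * k) * log_coeff_diff k))^2) \<le> C * inverse (real k ^ 2)"
  proof (intro exI allI impI)
    fix k :: nat
    assume k: "k \<ge> 2"
    have "real j \<le> real j * real k"
      using k by (simp add: mult_le_cancel_left1)
    moreover have "(real j + real m) * 2 \<le> (real j + real m) * real k"
      using k by (intro mult_left_mono) auto
    ultimately have "real (j + m * k) \<le> 2 * (real j + real m) * (real k - 1)"
      by (simp add: algebra_simps)
    then have "real (j + m * k) / (real k * (real k - 1))
        \<le> 2 * (real j + real m) * (real k - 1) / (real k * (real k - 1))"
      using k by (intro divide_right_mono) auto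
    also have "\<dots> = 2 * (real j + real m) / real k"
      using k by (simp add: field_simps)
    finally have "real (j + m * k) / (real k * (real k - 1)) \<le> 2 * (real j + real m) / real k" .
    moreover have "cmod (of_nat (j + m * k) * log_coeff_diff k) = real (j + m * k) / (real k * (real k - 1))"
      by (simp only: norm_mult norm_of_nat norm_log_coeff_diff[OF k]) simp
    ultimately have "cmod (of_nat (j + m * k) * log_coeff_diff k) \<le> 2 * (real j + real m) / real k"
      by simp
    then have "(cmod (of_nat (j + m * k) * log_coeff_diff k))^2 \<le> (2 * (real j + real m) / real k)^2"
      by (rule power_mono) simp
    then show "norm ((cmod (of_nat (j + m * k) * log_coeff_diff k))^2) \<le> C * inverse (real k ^ 2)"
      by (simp add: C_def power_divide inverse_eq_divide)
  qed
qed

definition delta_pair :: "nat \<Rightarrow> nat \<Rightarrow> complex" where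
  "delta_pair j p = delta j p + (- \<omega>) * delta (j + m) p"

lemma rshift_log_series_delta_pair:
  "log_series (cnj \<omega>) (rshift ^^ m) (delta_pair j) = spread m j log_coeff_diff"
proof -
  note R = rshift_log_series_delta(1)[of j] rshift_log_series_delta(1)[of "j + m"]
  have "log_series (cnj \<omega>) (rshift ^^ m) (delta_pair j)
      = (\<lambda>p. spread m j log_coeff p + (- \<omega>) * spread m (j + m) log_coeff p)"
    unfolding delta_pair_def rshift_power.Log_dom_add(2)[OF R(1) rshift_power.Log_dom_scale(1)[OF R(2)]]
      rshift_power.Log_dom_scale(2)[OF R(2)] rshift_log_series_delta(2) ..
  also have "\<dots> = spread m j log_coeff_diff"
    unfolding spread_shift[OF m_pos] by (simp add: spread_def log_coeff_diff_def fun_eq_iff)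
  finally show ?thesis .
qed

lemma delta_pair_in_ccr_dom: "delta_pair j \<in> ccr_dom m \<omega>"
proof -
  have dom: "delta_pair j \<in> Lmw_dom m \<omega>"
    unfolding delta_pair_def by (intro Lmw_dom_add Lmw_dom_scale delta_in_Lmw_dom)
  have numop_eq: "numop (delta_pair j) = (\<lambda>p. of_nat j * delta j p + (- \<omega> * of_nat (j + m)) * delta (j + m) p)"
    using m_pos by (auto simp: numop_def delta_pair_def delta_def fun_eq_iff)
  have numop_dom: "numop (delta_pair j) \<in> Lmw_dom m \<omega>"
    unfolding numop_eq by (intro Lmw_dom_add Lmw_dom_scale delta_in_Lmw_dom)
  have "log_series \<omega> (lshift ^^ m) (delta_pair j) p = 0" if "j + m < p" for p
    using that Lmw_domD(3)[OF dom]
    by (intro lshift_log_series_finite_support(2)[OF m_pos]) (auto simp: delta_pair_def delta_def)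
  then have L: "numop (log_series \<omega> (lshift ^^ m) (delta_pair j)) \<in> l2"
    by (intro l2_finite_support[of "{..j + m}"]) (auto simp: numop_def)
  have R: "numop (log_series (cnj \<omega>) (rshift ^^ m) (delta_pair j)) \<in> l2"
    unfolding rshift_log_series_delta_pair numop_spread[OF m_pos]
    by (rule l2_spread(1)[OF m_pos l2_weighted_log_coeff_diff])
  have numop_Lmw: "numop (Lmw m \<omega> (delta_pair j)) =
      (\<lambda>n. (\<i> / of_nat m * (Ln \<omega> - Ln (cnj \<omega>))) * numop (delta_pair j) n
        + (- (\<i> / of_nat m)) * numop (log_series \<omega> (lshift ^^ m) (delta_pair j)) n
        + (\<i> / of_nat m) * numop (log_series (cnj \<omega>) (rshift ^^ m) (delta_pair j)) n)"
    unfolding Lmw_eq by (simp add: numop_def fun_eq_iff algebra_simps)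
  have "numop (Lmw m \<omega> (delta_pair j)) \<in> l2"
    unfolding numop_Lmw by (intro l2_add l2_scale L R Lmw_domD(3)[OF numop_dom])
  then show ?thesis
    using dom numop_dom Lmw_l2[OF dom] Lmw_domD(3)[OF dom] Lmw_domD(3)[OF numop_dom]
    by (simp add: ccr_dom_iff numop_dom_def)
qed

lemma delta_telescope_in_ccr_dom: "(\<lambda>p. delta j p - \<omega>^t * delta (j + m * t) p) \<in> ccr_dom m \<omega>"
proof (induction t)
  case 0
  then show ?case using ccr_dom_zero by simp
next
  case (Suc t)
  have "(\<lambda>p. delta j p - \<omega>^Suc t * delta (j + m * Suc t) p)
      = (\<lambda>p. (delta j p - \<omega>^t * delta (j + m * t) p) + \<omega>^t * delta_pair (j + m * t) p)"
    by (simp add: delta_pair_def fun_eq_iff algebra_simps)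
  then show ?case
    using ccr_dom_add[OF Suc ccr_dom_scale[OF delta_pair_in_ccr_dom]] by simp
qed

definition delta_average :: "nat \<Rightarrow> nat \<Rightarrow> nat \<Rightarrow> complex" where
  "delta_average j K p = (1 / of_nat K) * (\<Sum>t=1..K. \<omega>^t * delta (j + m * t) p)"

lemma delta_minus_average_in_ccr_dom:
  assumes "K \<ge> 1"
  shows "(\<lambda>p. delta j p - delta_average j K p) \<in> ccr_dom m \<omega>"
proof -
  have "(1 / of_nat K) * (\<Sum>t\<in>{1..K}. delta j p - \<omega>^t * delta (j + m * t) p)
      = delta j p - delta_average j K p" for p
    using assms by (simp add: delta_average_def sum_subtractf right_diff_distrib)
  then have "(\<lambda>p. delta j p - delta_average j K p)
      = (\<lambda>p. (1 / of_nat K) * (\<Sum>t\<in>{1..K}. delta j p - \<omega>^t * delta (j + m * t) p))"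
    by simp
  moreover have "(\<lambda>p. (1 / of_nat K) * (\<Sum>t\<in>{1..K}. delta j p - \<omega>^t * delta (j + m * t) p))
      \<in> ccr_dom m \<omega>"
    by (intro ccr_dom_scale ccr_dom_sum delta_telescope_in_ccr_dom)
  ultimately show ?thesis by simp
qed

lemma l2norm_delta_average:
  assumes "K \<ge> 1"
  shows "delta_average j K \<in> l2" and "l2norm (delta_average j K) \<le> 1 / sqrt (real K)"
proof -
  let ?S = "(\<lambda>t. j + m * t) ` {1..K}"
  have support: "delta_average j K p = 0" if "p \<notin> ?S" for p
    using that unfolding delta_average_def
    by (intro mult_eq_0_iff[THEN iffD2] disjI2 sum.neutral) (auto simp: delta_def)
  then show "delta_average j K \<in> l2"
    by (intro l2_finite_support[of ?S]) auto
  have "cmod (delta_average j K p) \<le> 1 / real K" for p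
  proof -
    have "(\<Sum>t=1..K. \<omega>^t * delta (j + m * t) p)
        = (\<Sum>t\<in>{1..K}. if t = (p - j) div m then (if j \<le> p \<and> m dvd (p - j) then \<omega>^t else 0) else 0)"
      by (intro sum.cong) (auto simp: delta_def eq_add_mult_iff[OF m_pos])
    then have "cmod (\<Sum>t=1..K. \<omega>^t * delta (j + m * t) p) \<le> 1"
      using norm_omega by (simp add: norm_power)
    then show ?thesis
      unfolding delta_average_def by (simp add: norm_mult norm_divide divide_right_mono)
  qed
  then have "l2norm (delta_average j K) \<le> sqrt (card ?S) * (1 / real K)"
    using support by (intro l2norm_finite_support_le) auto
  also have "\<dots> \<le> sqrt (real K) * (1 / real K)"
    using card_image_le[of "{1..K}" "\<lambda>t. j + m * t"] by (intro mult_right_mono) auto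
  also have "\<dots> = 1 / sqrt (real K)"
    using assms by (simp add: field_simps)
  finally show "l2norm (delta_average j K) \<le> 1 / sqrt (real K)" .
qed

lemma ccr_dom_dense: "l2_dense (ccr_dom m \<omega>)"
  unfolding l2_dense_def
proof (intro conjI ballI allI impI ccr_dom_subset_l2)
  fix f :: "nat \<Rightarrow> complex" and e :: real
  assume f: "f \<in> l2" and e: "e > 0"
  obtain M where tail: "l2norm (\<lambda>p. if M < p then f p else 0) < e / 2"
    using order_tendstoD(2)[OF l2norm_tail_tendsto_0[OF f], of "e / 2"] e
    by (auto simp: eventually_sequentially)
  define S where "S = (\<Sum>j\<le>M. cmod (f j))"
  have "(\<lambda>K. S / sqrt (real K)) \<longlonglongrightarrow> 0"
    by (intro tendsto_divide_0[OF tendsto_const] filterlim_at_top_imp_at_infinity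
        filterlim_compose[OF sqrt_at_top filterlim_real_sequentially])
  then have "\<forall>\<^sub>F K in sequentially. S / sqrt (real K) < e / 2 \<and> K \<ge> 1"
    using e by (intro eventually_conj order_tendstoD(2)) auto
  then obtain K where K: "S / sqrt (real K) < e / 2" "K \<ge> 1"
    by (auto simp: eventually_sequentially)
  define R where "R p = (\<Sum>j\<le>M. f j * delta_average j K p)" for p
  define g where "g p = (\<Sum>j\<le>M. f j * (delta j p - delta_average j K p))" for p
  have "g \<in> ccr_dom m \<omega>"
    unfolding g_def by (intro ccr_dom_sum ccr_dom_scale delta_minus_average_in_ccr_dom K(2))
  have R_l2: "(\<lambda>p. f j * delta_average j K p) \<in> l2" for j
    by (intro l2_scale l2norm_delta_average(1) K(2))
  have "l2norm R \<le> (\<Sum>j\<le>M. l2norm (\<lambda>p. f j * delta_average j K p))"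
    unfolding R_def using R_l2 by (rule l2norm_sum_le)
  also have "\<dots> \<le> (\<Sum>j\<le>M. cmod (f j) * (1 / sqrt (real K)))"
  proof (rule sum_mono)
    fix j
    show "l2norm (\<lambda>p. f j * delta_average j K p) \<le> cmod (f j) * (1 / sqrt (real K))"
      unfolding l2norm_scale[OF l2norm_delta_average(1)[OF K(2)]]
      by (rule mult_left_mono[OF l2norm_delta_average(2)[OF K(2)]]) simp
  qed
  also have "\<dots> < e / 2"
    using K(1) by (simp add: S_def sum_divide_distrib)
  finally have "l2norm R < e / 2" .
  moreover have "(\<lambda>p. f p - g p) = (\<lambda>p. (if M < p then f p else 0) + R p)"
    by (simp add: g_def R_def fun_eq_iff right_diff_distrib sum_subtractf sum_mult_delta)
  moreover have "R \<in> l2"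
    unfolding R_def by (rule l2_sum[OF R_l2])
  then have "l2norm (\<lambda>p. (if M < p then f p else 0) + R p) \<le> l2norm (\<lambda>p. if M < p then f p else 0) + l2norm R"
    by (rule l2norm_triangle[OF l2_tail[OF f]])
  ultimately have "l2norm (\<lambda>p. f p - g p) < e"
    using tail by simp
  then show "\<exists>g\<in>ccr_dom m \<omega>. l2norm (\<lambda>p. f p - g p) < e"
    using \<open>g \<in> ccr_dom m \<omega>\<close> by blast
qed

end

theorem mainTheorem18:
  fixes \<omega> :: complex and m :: nat
  assumes "cmod \<omega> = 1" and "m \<ge> 1"
  shows "time_operator_with numop_dom numop (Lmw_dom m \<omega>) (Lmw m \<omega>)
           (prod_dom numop_dom (Lmw_dom m \<omega>) (Lmw m \<omega>) \<inter> prod_dom (Lmw_dom m \<omega>) numop_dom numop)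
       \<and> l2_dense (prod_dom numop_dom (Lmw_dom m \<omega>) (Lmw m \<omega>) \<inter> prod_dom (Lmw_dom m \<omega>) numop_dom numop)"
proof -
  have "\<omega> \<noteq> 0"
    using assms(1) by auto
  have dense: "l2_dense (ccr_dom m \<omega>)"
    by (rule ccr_dom_dense[OF assms])
  then have "l2_dense (Lmw_dom m \<omega>)"
    using ccr_dom_iff Lmw_domD(3) by (intro l2_dense_subset[OF dense]) auto
  then have "symmetric_op (Lmw_dom m \<omega>) (Lmw m \<omega>)"
    unfolding symmetric_op_def using Lmw_l2 Lmw_symmetric[OF \<open>\<omega> \<noteq> 0\<close>] by blast
  moreover have "is_subspace (ccr_dom m \<omega>)"
    unfolding is_subspace_def using ccr_dom_zero ccr_dom_add ccr_dom_scale by blast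
  moreover have "\<exists>\<phi>\<in>ccr_dom m \<omega>. \<phi> \<noteq> (\<lambda>n. 0)"
  proof
    show "delta_pair \<omega> m 0 \<in> ccr_dom m \<omega>"
      by (rule delta_pair_in_ccr_dom[OF assms])
    have "delta_pair \<omega> m 0 0 = 1"
      using assms(2) by (simp add: delta_pair_def[OF assms] delta_def)
    then show "delta_pair \<omega> m 0 \<noteq> (\<lambda>n. 0)" by auto
  qed
  moreover have "\<forall>\<phi>\<in>ccr_dom m \<omega>. (\<lambda>n. numop (Lmw m \<omega> \<phi>) n - Lmw m \<omega> (numop \<phi>) n) = (\<lambda>n. - \<i> * \<phi> n)"
    using Lmw_commutator[OF assms] ccr_dom_iff by blast
  ultimately show ?thesis
    using dense unfolding time_operator_with_def ccr_dom_def[symmetric] by blast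
qed

end
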